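(* Let $X$ be a real Hilbert space, let $A,B\colon X\rightrightarrows X$ be set-valued operators, let $C\colon X\to X$ be a single-valued operator, let $\eta,\gamma,\delta>0$, and set $\lambda:=1+\frac{\delta}{\gamma}$. Define the (possibly set-valued) operator $$T_{A,B,C}:=\mathrm{Id}-\eta J_{\gamma A}+\eta J_{\delta B}\big((1-\lambda)\mathrm{Id}+\lambda J_{\gamma A}-\delta C J_{\gamma A}\big),$$ i.e. $T_{A,B,C}x=\{x-\eta a+\eta b:\ a\in J_{\gamma A}x,\ b\in J_{\delta B}((1-\lambda)x+\lambda a-\delta Ca)\}$. Then $\operatorname{Fix}T_{A,B,C}\neq\varnothing$ if and only if $\operatorname{zer}(A+B+C)\neq\varnothing$. Moreover, if $J_{\gamma A}$ is single-valued, then $J_{\gamma A}(\operatorname{Fix}T_{A,B,C})=\operatorname{zer}(A+B+C)$.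
   Context: For a set-valued operator $A\colon X\rightrightarrows X$: the resolvent is $J_A:=(\mathrm{Id}+A)^{-1}$ (inverse in the sense of graphs); $\operatorname{zer}A:=\{x: 0\in Ax\}$; for a (possibly set-valued) operator $T$, $\operatorname{Fix}T:=\{x: x\in Tx\}$. *)

theory Defs
  imports "HOL-Analysis.Analysis"
begin

definition scale_op :: "real \<Rightarrow> ('a::real_vector \<Rightarrow> 'a set) \<Rightarrow> 'a \<Rightarrow> 'a set" where
  "scale_op c A = (\<lambda>x. (\<lambda>u. c *\<^sub>R u) ` A x)"

definition resolvent :: "('a::real_vector \<Rightarrow> 'a set) \<Rightarrow> 'a \<Rightarrow> 'a set" where
  "resolvent A x = {a. \<exists>u\<in>A a. x = a + u}"

definition zer :: "('a::real_vector \<Rightarrow> 'a set) \<Rightarrow> 'a set" where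
  "zer A = {x. 0 \<in> A x}"

definition Fix :: "('a \<Rightarrow> 'a set) \<Rightarrow> 'a set" where
  "Fix T = {x. x \<in> T x}"

definition sum3_op :: "('a::real_vector \<Rightarrow> 'a set) \<Rightarrow> ('a \<Rightarrow> 'a set) \<Rightarrow> ('a \<Rightarrow> 'a) \<Rightarrow> 'a \<Rightarrow> 'a set" where
  "sum3_op A B C = (\<lambda>x. {a + b + C x | a b. a \<in> A x \<and> b \<in> B x})"

definition T_op :: "real \<Rightarrow> real \<Rightarrow> real \<Rightarrow> ('a::real_vector \<Rightarrow> 'a set) \<Rightarrow> ('a \<Rightarrow> 'a set) \<Rightarrow> ('a \<Rightarrow> 'a) \<Rightarrow> 'a \<Rightarrow> 'a set" where
  "T_op \<eta> \<gamma> \<delta> A B C = (\<lambda>x. let lam = 1 + \<delta> / \<gamma> in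
     {x - \<eta> *\<^sub>R a + \<eta> *\<^sub>R b | a b. a \<in> resolvent (scale_op \<gamma> A) x \<and>
        b \<in> resolvent (scale_op \<delta> B) ((1 - lam) *\<^sub>R x + lam *\<^sub>R a - \<delta> *\<^sub>R C a)})"

definition single_valued_op :: "('a \<Rightarrow> 'b set) \<Rightarrow> bool" where
  "single_valued_op J \<longleftrightarrow> (\<forall>x. \<forall>u\<in>J x. \<forall>v\<in>J x. u = v)"

end

theory Submission
  imports Defs
begin

text \<open>Since \<eta> \<noteq> 0, x \<in> T x forces the two resolvent outputs to coincide: a = J(\<gamma>A) x is
  also J(\<delta>B) of (1 - \<lambda>) x + \<lambda> a - \<delta> C a. Writing x = a + \<gamma> u with u \<in> A a, that point
  collapses to a - \<delta> (u + C a), so the condition says exactly that some v \<in> B a has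
  u + v + C a = 0. Hence the fixed points of T are the points a + \<gamma> u with a a zero of
  A + B + C and u the A-part of that zero, and J(\<gamma>A) maps them back onto the zeros.\<close>

lemma resolvent_scale_op_iff:
  "a \<in> resolvent (scale_op c A) x \<longleftrightarrow> (\<exists>u\<in>A a. x = a + c *\<^sub>R u)"
  by (auto simp: resolvent_def scale_op_def)

lemma zer_sum3_op_iff:
  "z \<in> zer (sum3_op A B C) \<longleftrightarrow> (\<exists>u\<in>A z. \<exists>v\<in>B z. u + v + C z = 0)"
  by (auto simp: zer_def sum3_op_def)

lemma T_op_argument_eq:
  fixes a u :: "'a::real_vector"
  assumes "\<gamma> \<noteq> 0" and "x = a + \<gamma> *\<^sub>R u"
  shows "(1 - (1 + \<delta> / \<gamma>)) *\<^sub>R x + (1 + \<delta> / \<gamma>) *\<^sub>R a - \<delta> *\<^sub>R c = a - \<delta> *\<^sub>R (u + c)"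
  using assms by (simp add: algebra_simps)

lemma mem_Fix_T_op_iff:
  fixes A B :: "'a::real_vector \<Rightarrow> 'a set"
  assumes "\<eta> \<noteq> 0" and "\<gamma> \<noteq> 0" and "\<delta> \<noteq> 0"
  shows "x \<in> Fix (T_op \<eta> \<gamma> \<delta> A B C) \<longleftrightarrow>
    (\<exists>a. \<exists>u\<in>A a. \<exists>v\<in>B a. u + v + C a = 0 \<and> x = a + \<gamma> *\<^sub>R u)"
proof -
  define lam where "lam = 1 + \<delta> / \<gamma>"
  define y where "y a = (1 - lam) *\<^sub>R x + lam *\<^sub>R a - \<delta> *\<^sub>R C a" for a
  have "x \<in> Fix (T_op \<eta> \<gamma> \<delta> A B C) \<longleftrightarrow>
      (\<exists>a b. x = x - \<eta> *\<^sub>R a + \<eta> *\<^sub>R b \<and> a \<in> resolvent (scale_op \<gamma> A) x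
        \<and> b \<in> resolvent (scale_op \<delta> B) (y a))"
    by (auto simp: Fix_def T_op_def Let_def lam_def y_def)
  also have "\<dots> \<longleftrightarrow> (\<exists>a. a \<in> resolvent (scale_op \<gamma> A) x \<and> a \<in> resolvent (scale_op \<delta> B) (y a))"
    using assms(1) by (auto simp: algebra_simps)
  also have "\<dots> \<longleftrightarrow> (\<exists>a. \<exists>u\<in>A a. x = a + \<gamma> *\<^sub>R u \<and> (\<exists>v\<in>B a. y a = a + \<delta> *\<^sub>R v))"
    by (auto simp: resolvent_scale_op_iff)
  also have "\<dots> \<longleftrightarrow> (\<exists>a. \<exists>u\<in>A a. \<exists>v\<in>B a. u + v + C a = 0 \<and> x = a + \<gamma> *\<^sub>R u)"
  proof -
    have "y a = a + \<delta> *\<^sub>R v \<longleftrightarrow> u + v + C a = 0" if "x = a + \<gamma> *\<^sub>R u" for a u v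
    proof -
      have "y a = a + \<delta> *\<^sub>R v \<longleftrightarrow> \<delta> *\<^sub>R (u + v + C a) = 0"
        unfolding y_def lam_def T_op_argument_eq[OF assms(2) that]
        by (auto simp: algebra_simps)
      then show ?thesis
        using assms(3) by simp
    qed
    then show ?thesis
      by blast
  qed
  finally show ?thesis .
qed

lemma Fix_T_op_resolvent_zer:
  fixes A B :: "'a::real_vector \<Rightarrow> 'a set"
  assumes "\<eta> \<noteq> 0" and "\<gamma> \<noteq> 0" and "\<delta> \<noteq> 0" and "x \<in> Fix (T_op \<eta> \<gamma> \<delta> A B C)"
  shows "\<exists>a\<in>resolvent (scale_op \<gamma> A) x. a \<in> zer (sum3_op A B C)"
proof -
  from assms obtain a u v where uv: "u \<in> A a" "v \<in> B a" "u + v + C a = 0"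
    and x: "x = a + \<gamma> *\<^sub>R u"
    by (auto simp: mem_Fix_T_op_iff)
  have "a \<in> resolvent (scale_op \<gamma> A) x"
    using uv(1) x by (auto simp: resolvent_scale_op_iff)
  moreover have "a \<in> zer (sum3_op A B C)"
    using uv by (auto simp: zer_sum3_op_iff)
  ultimately show ?thesis ..
qed

lemma zer_resolvent_Fix_T_op:
  fixes A B :: "'a::real_vector \<Rightarrow> 'a set"
  assumes "\<eta> \<noteq> 0" and "\<gamma> \<noteq> 0" and "\<delta> \<noteq> 0" and "z \<in> zer (sum3_op A B C)"
  shows "\<exists>x\<in>Fix (T_op \<eta> \<gamma> \<delta> A B C). z \<in> resolvent (scale_op \<gamma> A) x"
proof -
  from assms(4) obtain u v where uv: "u \<in> A z" "v \<in> B z" "u + v + C z = 0"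
    by (auto simp: zer_sum3_op_iff)
  have "z + \<gamma> *\<^sub>R u \<in> Fix (T_op \<eta> \<gamma> \<delta> A B C)"
    using uv by (auto simp: mem_Fix_T_op_iff[OF assms(1-3)])
  moreover have "z \<in> resolvent (scale_op \<gamma> A) (z + \<gamma> *\<^sub>R u)"
    using uv(1) by (auto simp: resolvent_scale_op_iff)
  ultimately show ?thesis ..
qed

theorem proposition2p1:
  fixes A B :: "'a::{real_inner, complete_space} \<Rightarrow> 'a set"
    and C :: "'a \<Rightarrow> 'a"
    and \<eta> \<gamma> \<delta> :: real
  assumes "\<eta> > 0" and "\<gamma> > 0" and "\<delta> > 0"
  shows "(Fix (T_op \<eta> \<gamma> \<delta> A B C) \<noteq> {} \<longleftrightarrow> zer (sum3_op A B C) \<noteq> {})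
    \<and> (single_valued_op (resolvent (scale_op \<gamma> A)) \<longrightarrow>
        (\<Union>x\<in>Fix (T_op \<eta> \<gamma> \<delta> A B C). resolvent (scale_op \<gamma> A) x) = zer (sum3_op A B C))"
proof -
  let ?J = "resolvent (scale_op \<gamma> A)" and ?F = "Fix (T_op \<eta> \<gamma> \<delta> A B C)"
    and ?Z = "zer (sum3_op A B C)"
  have nonzero: "\<eta> \<noteq> 0" "\<gamma> \<noteq> 0" "\<delta> \<noteq> 0"
    using assms by auto
  note Fix_to_zer = Fix_T_op_resolvent_zer[OF nonzero]
    and zer_to_Fix = zer_resolvent_Fix_T_op[OF nonzero]
  have "?F \<noteq> {} \<longleftrightarrow> ?Z \<noteq> {}"
    using Fix_to_zer zer_to_Fix by blast
  moreover have "(\<Union>x\<in>?F. ?J x) = ?Z" if "single_valued_op ?J"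
  proof
    show "(\<Union>x\<in>?F. ?J x) \<subseteq> ?Z"
    proof
      fix a assume "a \<in> (\<Union>x\<in>?F. ?J x)"
      then obtain x where "x \<in> ?F" and a: "a \<in> ?J x"
        by blast
      then obtain a' where "a' \<in> ?J x" and "a' \<in> ?Z"
        using Fix_to_zer by blast
      with a that show "a \<in> ?Z"
        unfolding single_valued_op_def by metis
    qed
    show "?Z \<subseteq> (\<Union>x\<in>?F. ?J x)"
      using zer_to_Fix by blast
  qed
  ultimately show ?thesis
    by blast
qed

end
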